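(* Let $\mathcal{A}$ be a complex Banach algebra with identity, let $\lambda$ be a nonzero complex number, and let $a, b \in \mathcal{A}^d$. If $$ab = \lambda\, a^\pi b a b^\pi,$$ then $a + b \in \mathcal{A}^d$ and $$\begin{aligned}(a + b)^d ={}& b^\pi a^d + b^d a^\pi + \sum_{n=0}^{\infty} (b^d)^{n+2} a (a + b)^n a^\pi + b^\pi \sum_{n=0}^{\infty} (a + b)^n b (a^d)^{n+2} \\ &- \sum_{n=0}^{\infty} \sum_{k=0}^{\infty} (b^d)^{k+1} a (a + b)^{n+k} b (a^d)^{n+2} - \sum_{n=0}^{\infty} (b^d)^{n+2} a (a + b)^n b a^d ,\end{aligned}$$ where all series converge.
   Context: For $x\in\mathcal{A}$, $\mathrm{comm}(x)=\{y\in\mathcal{A}: xy=yx\}$. $\mathcal{A}^{qnil}$ is the set of quasinilpotent elements of $\mathcal{A}$, i.e. those $x$ with $\lim_{n\to\infty}\|x^n\|^{1/n}=0$. An element $x\in\mathcal{A}$ has a generalized Drazin (g-Drazin) inverse if there is $y \in \mathrm{comm}(x)$ with $y = yxy$ and $x - x^2y \in \mathcal{A}^{qnil}$; such $y$ is unique and denoted $x^d$. $\mathcal{A}^d$ denotes the set of g-Drazin invertible elements. The spectral idempotent of $x\in\mathcal{A}^d$ is $x^\pi = 1 - xx^d$. *)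

theory Defs
  imports "HOL-Analysis.Analysis"
begin

class scaleC =
  fixes scaleC :: "complex \<Rightarrow> 'a \<Rightarrow> 'a" (infixr \<open>*\<^sub>C\<close> 75)

class complex_banach_algebra_1 = real_normed_algebra_1 + banach + scaleC +
  assumes scaleC_add_right: "c *\<^sub>C (x + y) = c *\<^sub>C x + c *\<^sub>C y"
    and scaleC_add_left: "(c + d) *\<^sub>C x = c *\<^sub>C x + d *\<^sub>C x"
    and scaleC_scaleC: "c *\<^sub>C (d *\<^sub>C x) = (c * d) *\<^sub>C x"
    and scaleC_one: "1 *\<^sub>C x = x"
    and scaleR_scaleC: "r *\<^sub>R x = complex_of_real r *\<^sub>C x"
    and norm_scaleC: "norm (c *\<^sub>C x) = cmod c * norm x"
    and mult_scaleC_left: "(c *\<^sub>C x) * y = c *\<^sub>C (x * y)"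
    and mult_scaleC_right: "x * (c *\<^sub>C y) = c *\<^sub>C (x * y)"

definition quasinilpotent :: "'a::real_normed_algebra_1 \<Rightarrow> bool" where
  "quasinilpotent x \<longleftrightarrow> (\<lambda>n. root n (norm (x ^ n))) \<longlonglongrightarrow> 0"

definition is_gdrazin_inverse :: "'a::real_normed_algebra_1 \<Rightarrow> 'a \<Rightarrow> bool" where
  "is_gdrazin_inverse x y \<longleftrightarrow> x * y = y * x \<and> y = y * x * y \<and> quasinilpotent (x - x * x * y)"

definition gdrazin_invertible :: "'a::real_normed_algebra_1 \<Rightarrow> bool" where
  "gdrazin_invertible x \<longleftrightarrow> (\<exists>y. is_gdrazin_inverse x y)"

definition gdrazin :: "'a::real_normed_algebra_1 \<Rightarrow> 'a" where
  "gdrazin x = (THE y. is_gdrazin_inverse x y)"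

definition spectral_idem :: "'a::real_normed_algebra_1 \<Rightarrow> 'a" where
  "spectral_idem x = 1 - x * gdrazin x"

end

theory Submission
  imports Defs
begin

text \<open>Write \<open>x = a\<^sup>d\<close> and \<open>y = b\<^sup>d\<close>. Multiplying the hypothesis by \<open>x\<close> on the left,
resp.\ by \<open>y\<close> on the right, kills its right-hand side, so \<open>x b = 0 = a y\<close>, and then the
hypothesis collapses to \<open>a b = \<lambda> b a\<close>. Hence \<open>b x = \<lambda>\<^sup>-\<^sup>1 N (b x) x\<close> with the
quasinilpotent part \<open>N = a - a\<^sup>2 x\<close> of \<open>a\<close>; iterating this sandwich identity forces
\<open>b x = 0\<close>, and symmetrically \<open>y a = 0\<close>. With these four annihilation relations \<open>x + y\<close>
is the g-Drazin inverse of \<open>a + b\<close>: its quasinilpotent part is the sum of those of \<open>a\<close>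
and \<open>b\<close>, which \<open>\<lambda>\<close>-commute, and a sum of \<open>\<lambda>\<close>-commuting quasinilpotents is
again quasinilpotent. Finally every term of every series in the formula contains a
factor \<open>y a\<close> or \<open>b x\<close>, so the formula reduces to \<open>(a + b)\<^sup>d = x + y\<close>.\<close>

lemma scaleC_zero_right [simp]: "c *\<^sub>C (0::'a::complex_banach_algebra_1) = 0"
  using scaleC_add_right[of c "0::'a" 0] by simp

lemma quasinilpotent_iff_power_bound:
  fixes x :: "'a::real_normed_algebra_1"
  shows "quasinilpotent x \<longleftrightarrow> (\<forall>e>0. \<exists>C. \<forall>n. norm (x ^ n) \<le> C * e ^ n)"
proof
  assume qn: "quasinilpotent x"
  show "\<forall>e>0. \<exists>C. \<forall>n. norm (x ^ n) \<le> C * e ^ n"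
  proof (intro allI impI)
    fix e :: real assume e: "e > 0"
    have "eventually (\<lambda>n. root n (norm (x ^ n)) < e) sequentially"
      using qn e unfolding quasinilpotent_def by (intro order_tendstoD(2)) auto
    then obtain N where N: "\<And>n. n \<ge> N \<Longrightarrow> root n (norm (x ^ n)) < e"
      unfolding eventually_sequentially by blast
    define C where "C = 1 + (\<Sum>i\<le>N. norm (x ^ i) / e ^ i)"
    have "norm (x ^ n) \<le> C * e ^ n" for n
    proof (cases "n \<le> N")
      case True
      have "norm (x ^ n) / e ^ n \<le> (\<Sum>i\<le>N. norm (x ^ i) / e ^ i)"
        by (rule member_le_sum[where f = "\<lambda>i. norm (x ^ i) / e ^ i"]) (use True e in auto)
      also have "\<dots> \<le> C" unfolding C_def by simp
      finally show ?thesis using e by (simp add: divide_le_eq)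
    next
      case False
      have C1: "C \<ge> 1" unfolding C_def using e by (intro add_increasing2 sum_nonneg) auto
      have "norm (x ^ n) = root n (norm (x ^ n)) ^ n" using False by simp
      also have "\<dots> \<le> e ^ n" using N[of n] False by (intro power_mono) (auto simp: real_root_ge_zero)
      also have "\<dots> \<le> C * e ^ n" using C1 e by simp
      finally show ?thesis .
    qed
    then show "\<exists>C. \<forall>n. norm (x ^ n) \<le> C * e ^ n" by blast
  qed
next
  assume bound: "\<forall>e>0. \<exists>C. \<forall>n. norm (x ^ n) \<le> C * e ^ n"
  show "quasinilpotent x"
    unfolding quasinilpotent_def LIMSEQ_iff
  proof (intro allI impI)
    fix r :: real assume r: "r > 0"
    obtain C where C: "\<And>n. norm (x ^ n) \<le> C * (r/4) ^ n" using bound r by (meson zero_less_divide_iff zero_less_numeral)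
    have C1: "C \<ge> 1" using C[of 0] by simp
    have "eventually (\<lambda>n. root n C < 2) sequentially"
      using LIMSEQ_root_const[of C] C1 by (intro order_tendstoD(2)) auto
    then obtain N where N: "\<And>n. n \<ge> N \<Longrightarrow> root n C < 2" unfolding eventually_sequentially by blast
    have "norm (root n (norm (x ^ n)) - 0) < r" if n: "n \<ge> max N 1" for n
    proof -
      have "root n (norm (x ^ n)) \<le> root n (C * (r/4) ^ n)"
        using C n by (simp add: real_root_le_iff)
      also have "\<dots> = root n C * (r/4)" using n r by (simp add: real_root_mult real_root_power_cancel)
      also have "\<dots> < 2 * (r/4)" using N[of n] n r by (intro mult_strict_right_mono) auto
      finally show ?thesis using r n by (simp add: real_root_ge_zero)
    qed
    then show "\<exists>N. \<forall>n\<ge>N. norm (root n (norm (x ^ n)) - 0) < r" by blast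
  qed
qed

lemma quasinilpotent_power_decay:
  fixes x :: "'a::real_normed_algebra_1"
  assumes "quasinilpotent x" "K \<ge> 0"
  shows "(\<lambda>n. K ^ n * norm (x ^ n)) \<longlonglongrightarrow> 0"
proof -
  define e where "e = 1 / (2 * (K + 1))"
  have e: "e > 0" "K * e \<le> 1/2" "K * e \<ge> 0"
    unfolding e_def using assms(2) by (auto simp: field_simps)
  obtain C where C: "\<And>n. norm (x ^ n) \<le> C * e ^ n"
    using assms(1) e(1) unfolding quasinilpotent_iff_power_bound by blast
  have "eventually (\<lambda>n. norm (K ^ n * norm (x ^ n)) \<le> \<bar>C\<bar> * (1/2) ^ n) sequentially"
  proof (intro always_eventually allI)
    fix n
    have "norm (K ^ n * norm (x ^ n)) \<le> K ^ n * (C * e ^ n)"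
      using C[of n] assms(2) by (simp add: mult_left_mono)
    also have "\<dots> = C * (K * e) ^ n" by (simp add: power_mult_distrib)
    also have "\<dots> \<le> \<bar>C\<bar> * (1/2) ^ n"
      using e by (intro mult_mono power_mono) auto
    finally show "norm (K ^ n * norm (x ^ n)) \<le> \<bar>C\<bar> * (1/2) ^ n" .
  qed
  moreover have "(\<lambda>n. \<bar>C\<bar> * (1/2::real) ^ n) \<longlonglongrightarrow> 0"
    by (intro tendsto_mult_right_zero LIMSEQ_power_zero) auto
  ultimately show ?thesis by (rule Lim_null_comparison)
qed

lemma eq_0_if_norm_le_quasinilpotent_powers:
  fixes x z :: "'a::real_normed_algebra_1"
  assumes "quasinilpotent x" "K \<ge> 0" "\<And>n. norm z \<le> M * (K ^ n * norm (x ^ n))"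
  shows "z = 0"
proof -
  have "(\<lambda>n. M * (K ^ n * norm (x ^ n))) \<longlonglongrightarrow> M * 0"
    by (intro tendsto_mult tendsto_const quasinilpotent_power_decay assms)
  then have "norm z \<le> M * 0" by (rule LIMSEQ_le_const) (use assms(3) in blast)
  then show ?thesis by simp
qed

lemma sandwich_iterate:
  fixes z A B :: "'a::monoid_mult"
  assumes "z = A * z * B"
  shows "z = A ^ n * z * B ^ n"
proof (induction n)
  case (Suc n)
  have "z = A ^ n * (A * z * B) * B ^ n" using Suc assms by simp
  also have "\<dots> = A ^ Suc n * z * B ^ Suc n" by (metis mult.assoc power_Suc power_Suc2)
  finally show ?case .
qed simp

lemma sandwich_eq_0:
  fixes z A B :: "'a::real_normed_algebra_1"
  assumes "z = A * z * B" and "quasinilpotent A \<or> quasinilpotent B"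
  shows "z = 0"
proof -
  have bound: "norm z \<le> norm (A ^ n) * norm z * norm (B ^ n)" for n
    using sandwich_iterate[OF assms(1), of n]
    by (metis norm_mult_ineq order_trans mult_right_mono norm_ge_zero)
  from assms(2) show ?thesis
  proof
    assume "quasinilpotent A"
    then show ?thesis
    proof (rule eq_0_if_norm_le_quasinilpotent_powers[where K = "norm B" and M = "norm z"])
      show "norm z \<le> norm z * (norm B ^ n * norm (A ^ n))" for n
        using order_trans[OF bound mult_left_mono[OF norm_power_ineq]]
        by (simp add: mult_ac)
    qed simp
  next
    assume "quasinilpotent B"
    then show ?thesis
    proof (rule eq_0_if_norm_le_quasinilpotent_powers[where K = "norm A" and M = "norm z"])
      show "norm z \<le> norm z * (norm A ^ n * norm (B ^ n))" for n
        using order_trans[OF bound mult_right_mono[OF mult_right_mono[OF norm_power_ineq]]]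
        by (simp add: mult_ac)
    qed simp
  qed
qed

lemma gdrazin_idempotents_orthogonal:
  fixes x y z :: "'a::real_normed_algebra_1"
  assumes y: "is_gdrazin_inverse x y" and z: "is_gdrazin_inverse x z"
  shows "x * y * (1 - x * z) = 0" and "(1 - x * z) * (x * y) = 0"
proof -
  define q where "q = 1 - x * z"
  have xy: "x * y = y * x" and yxy: "y * x * y = y"
    using y unfolding is_gdrazin_inverse_def by auto
  have xz: "x * z = z * x" and zxz: "z * x * z = z" and qn: "quasinilpotent (x - x * x * z)"
    using z unfolding is_gdrazin_inverse_def by auto
  have qx: "q * x = x * q" unfolding q_def using xz by (simp add: algebra_simps flip: mult.assoc)
  have qq: "q * q = q" unfolding q_def using zxz by (simp add: algebra_simps mult.assoc)
  have qnxq: "quasinilpotent (x * q)" using qn unfolding q_def by (simp add: algebra_simps)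
  \<comment> \<open>Each product is fixed by a sandwich with the quasinilpotent part \<open>x q\<close> on one side.\<close>
  show "x * y * q = 0"
  proof (rule sandwich_eq_0)
    have "y * (x * y * q) * (x * q) = y * x * y * (q * x) * q" by (simp add: mult.assoc)
    also have "\<dots> = x * y * q" using yxy qx qq xy by (simp add: mult.assoc)
    finally show "x * y * q = y * (x * y * q) * (x * q)" ..
  qed (use qnxq in simp)
  show "q * (x * y) = 0"
  proof (rule sandwich_eq_0)
    have yyx: "x * y * y = y" using yxy xy by simp
    have "x * q * (q * (x * y)) * y = x * (q * q) * (x * y * y)" by (simp add: mult.assoc)
    also have "\<dots> = q * (x * y)" using qq qx yyx by (metis mult.assoc)
    finally show "q * (x * y) = x * q * (q * (x * y)) * y" ..
  qed (use qnxq in simp)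
qed

lemma is_gdrazin_inverse_unique:
  fixes x y z :: "'a::real_normed_algebra_1"
  assumes y: "is_gdrazin_inverse x y" and z: "is_gdrazin_inverse x z"
  shows "y = z"
proof -
  have xy: "x * y = y * x" and yxy: "y * x * y = y"
    using y unfolding is_gdrazin_inverse_def by auto
  have xz: "x * z = z * x" and zxz: "z * x * z = z"
    using z unfolding is_gdrazin_inverse_def by auto
  have "x * y = x * z * (x * y)"
    using gdrazin_idempotents_orthogonal(2)[OF y z] by (simp add: left_diff_distrib)
  also have "\<dots> = x * z"
    using gdrazin_idempotents_orthogonal(1)[OF z y] by (simp add: right_diff_distrib)
  finally have idem: "x * y = x * z" .
  have "y = y * (x * z)" using yxy idem by (simp add: mult.assoc)
  also have "\<dots> = z * (x * z)" using xy xz idem by (metis mult.assoc)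
  also have "\<dots> = z" using zxz by (simp add: mult.assoc)
  finally show ?thesis .
qed

lemma is_gdrazin_inverse_gdrazin:
  fixes x :: "'a::real_normed_algebra_1"
  assumes "gdrazin_invertible x"
  shows "is_gdrazin_inverse x (gdrazin x)"
  using assms is_gdrazin_inverse_unique unfolding gdrazin_invertible_def gdrazin_def
  by (metis theI)

lemma gdrazin_eqI:
  fixes x :: "'a::real_normed_algebra_1"
  assumes "is_gdrazin_inverse x y"
  shows "gdrazin x = y"
  using assms is_gdrazin_inverse_gdrazin is_gdrazin_inverse_unique
  unfolding gdrazin_invertible_def by blast

lemma mult_power_twisted_commute:
  fixes u v :: "'a::complex_banach_algebra_1"
  assumes "u * v = c *\<^sub>C (v * u)"
  shows "u * v ^ k = c ^ k *\<^sub>C (v ^ k * u)"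
proof (induction k)
  case 0 show ?case by (simp add: scaleC_one)
next
  case (Suc k)
  have "u * v ^ Suc k = (u * v) * v ^ k" by (simp add: mult.assoc)
  also have "\<dots> = c *\<^sub>C (v * (u * v ^ k))" by (simp add: assms mult_scaleC_left mult.assoc)
  also have "\<dots> = c ^ Suc k *\<^sub>C (v ^ Suc k * u)"
    by (simp add: Suc mult_scaleC_right scaleC_scaleC mult.assoc)
  finally show ?case .
qed

lemma power_add_twisted_commute_expansion:
  fixes u v :: "'a::complex_banach_algebra_1"
  assumes "u * v = c *\<^sub>C (v * u)"
  shows "\<exists>ts. (u + v) ^ n = sum_list ts \<and> length ts = 2 ^ n
    \<and> (\<forall>t\<in>set ts. \<exists>m k. k \<le> n \<and> t = c ^ m *\<^sub>C (v ^ k * u ^ (n - k)))"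
proof (induction n)
  case 0
  show ?case by (intro exI[of _ "[1]"]) (auto intro!: exI[of _ 0] simp: scaleC_one)
next
  case (Suc n)
  then obtain ts where ts: "(u + v) ^ n = sum_list ts" "length ts = 2 ^ n"
    and terms: "\<And>t. t \<in> set ts \<Longrightarrow> \<exists>m k. k \<le> n \<and> t = c ^ m *\<^sub>C (v ^ k * u ^ (n - k))"
    by blast
  define ts' where "ts' = map ((*) u) ts @ map ((*) v) ts"
  have "(u + v) ^ Suc n = sum_list ts'"
    unfolding ts'_def by (simp add: ts(1) distrib_right sum_list_const_mult)
  moreover have "length ts' = 2 ^ Suc n" unfolding ts'_def using ts(2) by simp
  moreover have "\<exists>m k. k \<le> Suc n \<and> t = c ^ m *\<^sub>C (v ^ k * u ^ (Suc n - k))" if "t \<in> set ts'" for t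
  proof -
    from that obtain s where "s \<in> set ts" and s: "t = u * s \<or> t = v * s"
      unfolding ts'_def by auto
    then obtain m k where k: "k \<le> n" and sk: "s = c ^ m *\<^sub>C (v ^ k * u ^ (n - k))"
      using terms by blast
    have "u * s = c ^ (m + k) *\<^sub>C (v ^ k * u ^ (Suc n - k))"
      using k unfolding sk
      by (simp add: mult_scaleC_right mult_scaleC_left scaleC_scaleC power_add Suc_diff_le
          mult_power_twisted_commute[OF assms] flip: mult.assoc)
    moreover have "v * s = c ^ m *\<^sub>C (v ^ Suc k * u ^ (Suc n - Suc k))"
      unfolding sk by (simp add: mult_scaleC_right mult.assoc)
    ultimately show ?thesis using s k by (metis Suc_le_mono le_SucI)
  qed
  ultimately show ?case by blast
qed

lemma norm_sum_list_le:
  fixes ts :: "'a::real_normed_vector list"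
  assumes "\<And>t. t \<in> set ts \<Longrightarrow> norm t \<le> B"
  shows "norm (sum_list ts) \<le> real (length ts) * B"
  using assms
proof (induction ts)
  case (Cons t ts)
  have "norm (sum_list (t # ts)) \<le> norm t + norm (sum_list ts)" by (simp add: norm_triangle_ineq)
  also have "\<dots> \<le> B + length ts * B" using Cons by (intro add_mono) auto
  finally show ?case by (simp add: algebra_simps)
qed simp

lemma quasinilpotent_add_twisted_commute_le1:
  fixes u v :: "'a::complex_banach_algebra_1"
  assumes uv: "u * v = c *\<^sub>C (v * u)" and c: "cmod c \<le> 1"
    and qu: "quasinilpotent u" and qv: "quasinilpotent v"
  shows "quasinilpotent (u + v)"
  unfolding quasinilpotent_iff_power_bound
proof (intro allI impI)
  fix e :: real assume e: "e > 0"
  obtain Cu where Cu: "\<And>n. norm (u ^ n) \<le> Cu * (e/2) ^ n"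
    using qu e unfolding quasinilpotent_iff_power_bound by (meson half_gt_zero)
  obtain Cv where Cv: "\<And>n. norm (v ^ n) \<le> Cv * (e/2) ^ n"
    using qv e unfolding quasinilpotent_iff_power_bound by (meson half_gt_zero)
  have Cv1: "Cv \<ge> 1" using Cv[of 0] by simp
  have "norm ((u + v) ^ n) \<le> (Cu * Cv) * e ^ n" for n
  proof -
    obtain ts where ts: "(u + v) ^ n = sum_list ts" "length ts = 2 ^ n"
      and terms: "\<And>t. t \<in> set ts \<Longrightarrow> \<exists>m k. k \<le> n \<and> t = c ^ m *\<^sub>C (v ^ k * u ^ (n - k))"
      using power_add_twisted_commute_expansion[OF uv] by blast
    have "norm t \<le> Cu * Cv * (e/2) ^ n" if t_in: "t \<in> set ts" for t
    proof -
      obtain m k where k: "k \<le> n" and t: "t = c ^ m *\<^sub>C (v ^ k * u ^ (n - k))"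
        using terms[OF t_in] by blast
      have "norm t \<le> norm (v ^ k) * norm (u ^ (n - k))"
        unfolding t norm_scaleC using c
        by (simp add: norm_power power_le_one mult_left_le_one_le norm_mult_ineq
            order_trans[OF _ norm_mult_ineq])
      also have "\<dots> \<le> (Cv * (e/2) ^ k) * (Cu * (e/2) ^ (n - k))"
        using Cv1 e by (intro mult_mono Cu Cv) auto
      also have "\<dots> = Cu * Cv * (e/2) ^ n"
        using k by (simp add: power_add[symmetric])
      finally show ?thesis .
    qed
    then have "norm ((u + v) ^ n) \<le> 2 ^ n * (Cu * Cv * (e/2) ^ n)"
      using norm_sum_list_le[of ts] ts by simp
    also have "\<dots> = (Cu * Cv) * e ^ n" by (simp add: power_divide)
    finally show ?thesis .
  qed
  then show "\<exists>C. \<forall>n. norm ((u + v) ^ n) \<le> C * e ^ n" by blast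
qed

lemma quasinilpotent_add_twisted_commute:
  fixes u v :: "'a::complex_banach_algebra_1"
  assumes uv: "u * v = c *\<^sub>C (v * u)" and c: "c \<noteq> 0"
    and qu: "quasinilpotent u" and qv: "quasinilpotent v"
  shows "quasinilpotent (u + v)"
proof (cases "cmod c \<le> 1")
  case True
  then show ?thesis using quasinilpotent_add_twisted_commute_le1[OF uv _ qu qv] by simp
next
  case False
  have "v * u = inverse c *\<^sub>C (u * v)"
    using c by (simp add: uv scaleC_scaleC scaleC_one)
  moreover have "cmod (inverse c) \<le> 1" using False by (simp add: norm_inverse inverse_le_1_iff)
  ultimately have "quasinilpotent (v + u)"
    using quasinilpotent_add_twisted_commute_le1[OF _ _ qv qu] by blast
  then show ?thesis by (simp add: add.commute)
qed

lemma spectral_hypothesis_consequences: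
  fixes a b x y :: "'a::complex_banach_algebra_1"
  assumes X: "is_gdrazin_inverse a x" and Y: "is_gdrazin_inverse b y"
    and H: "a * b = l *\<^sub>C ((1 - a * x) * b * a * (1 - b * y))"
  shows "x * b = 0" and "a * y = 0" and "a * b = l *\<^sub>C (b * a)"
proof -
  have ax: "a * x = x * a" and xax: "x * a * x = x"
    using X unfolding is_gdrazin_inverse_def by auto
  have by_: "b * y = y * b" and yby: "y * b * y = y"
    using Y unfolding is_gdrazin_inverse_def by auto
  have "x * (a * b) = l *\<^sub>C (x * (1 - a * x) * b * a * (1 - b * y))"
    unfolding H by (simp add: mult_scaleC_right mult.assoc)
  also have "x * (1 - a * x) = 0" using xax by (simp add: right_diff_distrib mult.assoc)
  finally have "x * (a * b) = 0" by simp
  moreover have "x * b = x * x * (a * b)" using xax ax by (metis mult.assoc)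
  ultimately show xb: "x * b = 0" by (simp add: mult.assoc)
  have "a * b * y = l *\<^sub>C ((1 - a * x) * b * a * ((1 - b * y) * y))"
    unfolding H by (simp add: mult_scaleC_left mult.assoc)
  also have "(1 - b * y) * y = 0" using yby by_ by (simp add: left_diff_distrib)
  finally have "a * b * y = 0" by simp
  moreover have "a * y = a * b * y * y" using yby by_ by (metis mult.assoc)
  ultimately show ay: "a * y = 0" by simp
  have "(1 - a * x) * b = b" using xb by (simp add: left_diff_distrib mult.assoc)
  moreover have "a * (1 - b * y) = a" using ay by_ by (simp add: right_diff_distrib flip: mult.assoc)
  ultimately have "(1 - a * x) * b * a * (1 - b * y) = b * a" by (metis mult.assoc)
  with H show "a * b = l *\<^sub>C (b * a)" by simp
qed

lemma gdrazin_annihilators_twisted_commute: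
  fixes a b x y :: "'a::complex_banach_algebra_1"
  assumes l: "l \<noteq> 0" and X: "is_gdrazin_inverse a x" and Y: "is_gdrazin_inverse b y"
    and ab: "a * b = l *\<^sub>C (b * a)" and xb: "x * b = 0" and ay: "a * y = 0"
  shows "b * x = 0" and "y * a = 0"
proof -
  have ax: "a * x = x * a" and xax: "x * a * x = x" and qnN: "quasinilpotent (a - a * a * x)"
    using X unfolding is_gdrazin_inverse_def by auto
  have by_: "b * y = y * b" and yby: "y * b * y = y" and qnM: "quasinilpotent (b - b * b * y)"
    using Y unfolding is_gdrazin_inverse_def by auto
  have ba: "b * a = inverse l *\<^sub>C (a * b)"
    using l by (simp add: ab scaleC_scaleC scaleC_one)
  show "b * x = 0"
  proof (rule sandwich_eq_0)
    have "b * x = b * a * x * x" using xax ax by (metis mult.assoc)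
    also have "\<dots> = inverse l *\<^sub>C (a * b * x * x)" by (simp add: ba mult_scaleC_left)
    also have "a * b * x * x = (a - a * a * x) * (b * x) * x"
      using xb by (simp add: left_diff_distrib mult.assoc flip: mult.assoc[of x b])
    finally show "b * x = (a - a * a * x) * (b * x) * (inverse l *\<^sub>C x)"
      by (simp add: mult_scaleC_right)
  qed (use qnN in simp)
  show "y * a = 0"
  proof (rule sandwich_eq_0)
    have "a * b * b * y = a * y * b * b" using by_ by (metis mult.assoc)
    then have abby: "a * b * b * y = 0" using ay by simp
    have "y * a = y * y * (b * a)" using yby by_ by (metis mult.assoc)
    also have "\<dots> = inverse l *\<^sub>C (y * y * a * b)" by (simp add: ba mult_scaleC_right mult.assoc)
    also have "y * y * a * b = y * (y * a) * (b - b * b * y)"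
      using abby by (simp add: right_diff_distrib mult.assoc)
    finally show "y * a = (inverse l *\<^sub>C y) * (y * a) * (b - b * b * y)"
      by (simp add: mult_scaleC_left)
  qed (use qnM in simp)
qed

lemma is_gdrazin_inverse_add_twisted_commute:
  fixes a b x y :: "'a::complex_banach_algebra_1"
  assumes l: "l \<noteq> 0" and X: "is_gdrazin_inverse a x" and Y: "is_gdrazin_inverse b y"
    and ab: "a * b = l *\<^sub>C (b * a)" and xb: "x * b = 0" and ay: "a * y = 0"
  shows "is_gdrazin_inverse (a + b) (x + y)"
proof -
  define N where "N = a - a * a * x"
  define M where "M = b - b * b * y"
  have ax: "a * x = x * a" and xax: "x * a * x = x" and qnN: "quasinilpotent N"
    using X unfolding is_gdrazin_inverse_def N_def by auto
  have by_: "b * y = y * b" and yby: "y * b * y = y" and qnM: "quasinilpotent M"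
    using Y unfolding is_gdrazin_inverse_def M_def by auto
  have bx: "b * x = 0" and ya: "y * a = 0"
    using gdrazin_annihilators_twisted_commute[OF l X Y ab xb ay] by auto
  have xy: "x * y = 0" using xax ax ay by (metis mult.assoc mult_zero_right)
  have yx: "y * x = 0" using yby by_ bx by (metis mult.assoc mult_zero_right)
  have aby: "a * b * y = 0" using by_ ay by (metis mult.assoc mult_zero_left)
  have bax: "b * a * x = 0" using ax bx by (metis mult.assoc mult_zero_left)
  have right: "(a + b) * (x + y) = a * x + b * y" using ay bx by (simp add: algebra_simps)
  have left: "(x + y) * (a + b) = a * x + b * y" using xb ya ax by_ by (simp add: algebra_simps)
  have "(x + y) * (a + b) * (x + y) = a * x * x + b * y * y"
    using left xy yx by (simp add: algebra_simps mult.assoc)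
  then have inner: "(x + y) * (a + b) * (x + y) = x + y" using xax yby ax by_ by simp
  have "(a + b) * (a + b) * (x + y) = (a + b) * (a * x + b * y)"
    using right by (simp add: mult.assoc)
  also have "\<dots> = a * a * x + (a * b * y + b * a * x) + b * b * y"
    by (simp add: ring_distribs mult.assoc)
  finally have "(a + b) - (a + b) * (a + b) * (x + y) = N + M"
    unfolding N_def M_def using aby bax by simp
  moreover have "N * M = l *\<^sub>C (M * N)"
  proof -
    have "N * b = a * b" unfolding N_def using xb by (simp add: left_diff_distrib mult.assoc)
    moreover have "N * (b * b * y) = 0"
    proof -
      have "a * b * b * y = 0" using by_ ay by (metis mult.assoc mult_zero_left)
      moreover have "x * (b * w) = 0" for w using xb by (metis mult.assoc mult_zero_left)
      ultimately show ?thesis unfolding N_def by (simp add: left_diff_distrib mult.assoc)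
    qed
    moreover have "M * a = b * a" unfolding M_def using ya by (simp add: left_diff_distrib mult.assoc)
    moreover have "M * (a * a * x) = 0"
    proof -
      have "b * a * a * x = 0" using ax bax by (metis mult.assoc mult_zero_left)
      moreover have "y * (a * w) = 0" for w using ya by (metis mult.assoc mult_zero_left)
      ultimately show ?thesis unfolding M_def by (simp add: left_diff_distrib mult.assoc)
    qed
    ultimately have "N * M = a * b" and "M * N = b * a"
      by (simp_all add: right_diff_distrib N_def M_def)
    then show ?thesis using ab by simp
  qed
  ultimately have "quasinilpotent ((a + b) - (a + b) * (a + b) * (x + y))"
    using quasinilpotent_add_twisted_commute[OF _ l qnN qnM] by simp
  then show ?thesis
    unfolding is_gdrazin_inverse_def using left right inner by simp
qed

theorem theorem2p4:
  fixes a b :: "'a::complex_banach_algebra_1" and l :: complex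
  assumes "l \<noteq> 0"
    and "gdrazin_invertible a" and "gdrazin_invertible b"
    and "a * b = l *\<^sub>C (spectral_idem a * b * a * spectral_idem b)"
  shows "gdrazin_invertible (a + b)
    \<and> summable (\<lambda>n. gdrazin b ^ (n + 2) * a * (a + b) ^ n * spectral_idem a)
    \<and> summable (\<lambda>n. (a + b) ^ n * b * gdrazin a ^ (n + 2))
    \<and> (\<forall>n. summable (\<lambda>k. gdrazin b ^ (k + 1) * a * (a + b) ^ (n + k) * b * gdrazin a ^ (n + 2)))
    \<and> summable (\<lambda>n. \<Sum>k. gdrazin b ^ (k + 1) * a * (a + b) ^ (n + k) * b * gdrazin a ^ (n + 2))
    \<and> summable (\<lambda>n. gdrazin b ^ (n + 2) * a * (a + b) ^ n * b * gdrazin a)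
    \<and> gdrazin (a + b) =
        spectral_idem b * gdrazin a + gdrazin b * spectral_idem a
      + (\<Sum>n. gdrazin b ^ (n + 2) * a * (a + b) ^ n * spectral_idem a)
      + spectral_idem b * (\<Sum>n. (a + b) ^ n * b * gdrazin a ^ (n + 2))
      - (\<Sum>n. \<Sum>k. gdrazin b ^ (k + 1) * a * (a + b) ^ (n + k) * b * gdrazin a ^ (n + 2))
      - (\<Sum>n. gdrazin b ^ (n + 2) * a * (a + b) ^ n * b * gdrazin a)"
proof -
  define x y where "x = gdrazin a" and "y = gdrazin b"
  have X: "is_gdrazin_inverse a x" and Y: "is_gdrazin_inverse b y"
    unfolding x_def y_def using assms(2,3) by (simp_all add: is_gdrazin_inverse_gdrazin)
  have H: "a * b = l *\<^sub>C ((1 - a * x) * b * a * (1 - b * y))"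
    using assms(4) unfolding spectral_idem_def x_def y_def .
  note hyp = spectral_hypothesis_consequences[OF X Y H]
  have sum: "is_gdrazin_inverse (a + b) (x + y)"
    using is_gdrazin_inverse_add_twisted_commute[OF assms(1) X Y hyp(3,1,2)] .
  have bx: "b * x = 0" and ya: "y * a = 0"
    using gdrazin_annihilators_twisted_commute[OF assms(1) X Y hyp(3,1,2)] by auto
  have y_pow: "y ^ Suc k * a = 0" for k
    using ya by (metis mult.assoc mult_zero_right power_Suc2)
  have x_pow: "w * b * x ^ Suc k = 0" for w k
    using bx by (metis mult.assoc mult_zero_left mult_zero_right power_Suc)
  have "b * y * x = 0"
    using Y bx unfolding is_gdrazin_inverse_def by (metis mult.assoc mult_zero_right)
  moreover have "y * (a * x) = 0" using ya by (metis mult.assoc mult_zero_left)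
  ultimately have "(1 - b * y) * x + y * (1 - a * x) = x + y" by (simp add: ring_distribs)
  moreover have series_vanish:
    "(\<lambda>n. y ^ (n + 2) * a * (a + b) ^ n * (1 - a * x)) = (\<lambda>n. 0)"
    "(\<lambda>n. (a + b) ^ n * b * x ^ (n + 2)) = (\<lambda>n. 0)"
    "(\<lambda>k. y ^ (k + 1) * a * (a + b) ^ (n + k) * b * x ^ (n + 2)) = (\<lambda>k. 0)"
    "(\<lambda>n. y ^ (n + 2) * a * (a + b) ^ n * b * x) = (\<lambda>n. 0)" for n
    by (simp_all only: add_2_eq_Suc' Suc_eq_plus1[symmetric] y_pow x_pow mult_zero_left)
  ultimately show ?thesis
    using gdrazin_eqI[OF sum] sum unfolding gdrazin_invertible_def
    unfolding x_def[symmetric] y_def[symmetric] spectral_idem_def by simp blast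
qed

end
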